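(* Let $B>0$ and $c>0$, and set $\epsilon^*(B)=\dfrac{c\,e^{-c/2}}{1+B}$. Let $\beta$ be Lipschitz on $[0,1]$ with $\|\beta\|_\infty\le B$, let $k=\mathcal{K}(\beta)$ be the exact backstepping kernel, and let $\hat k\in C^0[0,1]$ satisfy $|k(x)-\hat k(x)|<\epsilon$ for all $x\in[0,1]$, where $\epsilon\in(0,\epsilon^* )$. Put $\tilde k=k-\hat k$ and $\delta(x)=-\tilde k(x)+\int_0^x\beta(x-y)\tilde k(y)\,dy$. Then along solutions $\hat w$ of $$\hat w_t(x,t)=\hat w_x(x,t)+\delta(x)\hat w(0,t),\quad x\in[0,1],\qquad \hat w(1,t)=0,$$ the functional $V(t)=\int_0^1 e^{cx}\hat w^2(x,t)\,dx$ satisfies $V(t)\le V(0)e^{-c^*t}$ for all $t\ge0$, where $$c^* = c-\frac{e^c}{c}\epsilon^2(1+B)^2>0.$$ Moreover, the required accuracy $\epsilon^*$ is maximized over $c>0$ at $c=2$, where $\epsilon^*(B)=\dfrac{2}{e(1+B)}$.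
   Context: The backstepping kernel operator $\mathcal{K}$ maps $\beta\in C^0[0,1]$ to the solution $k$ of $k(x)=-\beta(x)+\int_0^x\beta(x-y)k(y)\,dy$, $x\in[0,1]$. $\|\cdot\|_\infty$ is the supremum norm on $[0,1]$. (The target system arises from the plant $u_t=u_x+\beta(x)u(0,t)$, $u(1,t)=\int_0^1\hat k(1-y)u(y,t)dy$ via $\hat w=u-\int_0^x\hat k(x-y)u(y)dy$.) *)

theory Defs
  imports "HOL-Analysis.Analysis"
begin

definition backstepping_kernel :: "(real \<Rightarrow> real) \<Rightarrow> (real \<Rightarrow> real) \<Rightarrow> bool" where
  "backstepping_kernel \<beta> k \<longleftrightarrow> continuous_on {0..1} k \<and>
     (\<forall>x\<in>{0..1}. k x = - \<beta> x + integral {0..x} (\<lambda>y. \<beta> (x - y) * k y))"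

definition eps_star :: "real \<Rightarrow> real \<Rightarrow> real" where
  "eps_star c B = c * exp (- c / 2) / (1 + B)"

definition classical_solution :: "(real \<Rightarrow> real) \<Rightarrow> (real \<Rightarrow> real \<Rightarrow> real) \<Rightarrow> bool" where
  "classical_solution \<delta> w \<longleftrightarrow>
     continuous_on ({0..1} \<times> {0..}) (\<lambda>(x,t). w x t) \<and>
     (\<exists>wx wt. continuous_on ({0..1} \<times> {0..}) (\<lambda>(x,t). wx x t) \<and>
              continuous_on ({0..1} \<times> {0..}) (\<lambda>(x,t). wt x t) \<and>
              (\<forall>x\<in>{0..1}. \<forall>t\<in>{0..}.
                 ((\<lambda>y. w y t) has_real_derivative wx x t) (at x within {0..1}) \<and>
                 ((\<lambda>s. w x s) has_real_derivative wt x t) (at t within {0..}) \<and>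
                 wt x t = wx x t + \<delta> x * w 0 t)) \<and>
     (\<forall>t\<in>{0..}. w 1 t = 0)"

end

theory Submission
  imports Defs
begin

text \<open>The defect delta of the target system is built from k - k_hat alone, so
  |delta| <= eps (1 + B). Differentiating V along a solution and integrating by parts,
  the transport term contributes -w(0,t)^2 - c V, while Young's inequality bounds the cross term
  2 int e^(cx) w delta w(0,t) dx by w(0,t)^2 + (e^c / c) eps^2 (1 + B)^2 V. Hence V' <= -c* V, and
  exponential decay follows. Finally c e^(-c/2) <= 2/e is e^y >= 1 + y at y = c/2 - 1.\<close>

lemma continuous_on_slice:
  assumes "continuous_on (A \<times> B) (\<lambda>(x, y). f x y)" and "y \<in> B"
  shows "continuous_on A (\<lambda>x. f x y)"
proof -
  have "continuous_on A (\<lambda>x. (\<lambda>(x, y). f x y) (x, y))"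
    using assms by (intro continuous_on_compose2[OF assms(1)] continuous_intros) auto
  then show ?thesis
    by simp
qed

lemma has_integral_exp_scaled:
  fixes c :: real
  assumes "c \<noteq> 0"
  shows "((\<lambda>x. exp (c * x)) has_integral (exp c - 1) / c) {0..1}"
proof -
  have "((\<lambda>x. exp (c * x)) has_integral exp (c * 1) / c - exp (c * 0) / c) {0..1}"
    by (rule fundamental_theorem_of_calculus)
      (use assms in \<open>auto intro!: derivative_eq_intros
         simp flip: has_real_derivative_iff_has_vector_derivative\<close>)
  then show ?thesis
    by (simp add: diff_divide_distrib)
qed

lemma weighted_energy_identity:
  fixes W W' :: "real \<Rightarrow> real" and c :: real
  assumes cont: "continuous_on {0..1} W'"
    and deriv: "\<And>x. x \<in> {0..1} \<Longrightarrow> (W has_real_derivative W' x) (at x within {0..1})"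
  shows "integral {0..1} (\<lambda>x. exp (c * x) * (2 * W x * W' x))
       = exp c * (W 1)\<^sup>2 - (W 0)\<^sup>2 - c * integral {0..1} (\<lambda>x. exp (c * x) * (W x)\<^sup>2)"
proof -
  have "continuous_on {0..1} W"
    using deriv DERIV_continuous continuous_on_eq_continuous_within by blast
  then have int_sq: "(\<lambda>x. exp (c * x) * (W x)\<^sup>2) integrable_on {0..1}"
    and int_cross: "(\<lambda>x. exp (c * x) * (2 * W x * W' x)) integrable_on {0..1}"
    using cont by (auto intro!: integrable_continuous_interval continuous_intros)
  have "((\<lambda>x. c * (exp (c * x) * (W x)\<^sup>2) + exp (c * x) * (2 * W x * W' x)) has_integral
      exp (c * 1) * (W 1)\<^sup>2 - exp (c * 0) * (W 0)\<^sup>2) {0..1}"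
  proof (rule fundamental_theorem_of_calculus)
    fix x :: real
    assume "x \<in> {0..1}"
    then have "((\<lambda>x. exp (c * x) * (W x)\<^sup>2) has_real_derivative
        c * (exp (c * x) * (W x)\<^sup>2) + exp (c * x) * (2 * W x * W' x)) (at x within {0..1})"
      using deriv by (auto intro!: derivative_eq_intros simp: algebra_simps)
    then show "((\<lambda>x. exp (c * x) * (W x)\<^sup>2) has_vector_derivative
        c * (exp (c * x) * (W x)\<^sup>2) + exp (c * x) * (2 * W x * W' x)) (at x within {0..1})"
      by (simp add: has_real_derivative_iff_has_vector_derivative)
  qed simp
  moreover have "((\<lambda>x. c * (exp (c * x) * (W x)\<^sup>2) + exp (c * x) * (2 * W x * W' x)) has_integral
      c * integral {0..1} (\<lambda>x. exp (c * x) * (W x)\<^sup>2)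
      + integral {0..1} (\<lambda>x. exp (c * x) * (2 * W x * W' x))) {0..1}"
    using int_sq int_cross by (intro has_integral_add has_integral_mult_right integrable_integral)
  ultimately show ?thesis
    by (auto dest: has_integral_unique)
qed

lemma weighted_cross_term_bound:
  fixes W g :: "real \<Rightarrow> real" and c M l :: real
  assumes "c \<noteq> 0" and "l > 0"
    and "continuous_on {0..1} W" and "continuous_on {0..1} g"
    and g_bound: "\<And>x. x \<in> {0..1} \<Longrightarrow> \<bar>g x\<bar> \<le> M"
  shows "integral {0..1} (\<lambda>x. exp (c * x) * (2 * W x * g x))
       \<le> l * M\<^sup>2 * ((exp c - 1) / c) + integral {0..1} (\<lambda>x. exp (c * x) * (W x)\<^sup>2) / l"
proof -
  have pointwise: "exp (c * x) * (2 * W x * g x)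
      \<le> l * M\<^sup>2 * exp (c * x) + exp (c * x) * (W x)\<^sup>2 / l" if "x \<in> {0..1}" for x
  proof -
    have "2 * W x * g x * l \<le> (l * g x)\<^sup>2 + (W x)\<^sup>2"
      using sum_squares_ge_zero[of "l * g x - W x" 0] by (simp add: power2_eq_square algebra_simps)
    then have "2 * W x * g x \<le> l * (g x)\<^sup>2 + (W x)\<^sup>2 / l"
      using \<open>l > 0\<close> by (simp add: field_simps power2_eq_square)
    moreover have "(g x)\<^sup>2 \<le> M\<^sup>2"
      using g_bound[OF that] by (metis abs_ge_zero power2_abs power_mono)
    then have "l * (g x)\<^sup>2 \<le> l * M\<^sup>2"
      using \<open>l > 0\<close> by simp
    ultimately have "2 * W x * g x \<le> l * M\<^sup>2 + (W x)\<^sup>2 / l"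
      by linarith
    then have "exp (c * x) * (2 * W x * g x) \<le> exp (c * x) * (l * M\<^sup>2 + (W x)\<^sup>2 / l)"
      by (rule mult_left_mono) simp
    then show ?thesis
      by (simp add: algebra_simps)
  qed
  have "((\<lambda>x. l * M\<^sup>2 * exp (c * x) + exp (c * x) * (W x)\<^sup>2 / l) has_integral
      l * M\<^sup>2 * ((exp c - 1) / c) + integral {0..1} (\<lambda>x. exp (c * x) * (W x)\<^sup>2) / l) {0..1}"
    using assms by (intro has_integral_add has_integral_mult_right has_integral_divide
        has_integral_exp_scaled integrable_integral integrable_continuous_interval continuous_intros)
  then show ?thesis
    using assms by (intro has_integral_le[OF integrable_integral _ pointwise])
      (auto intro!: integrable_continuous_interval continuous_intros)
qed

lemma weighted_energy_dissipation:
  fixes W W' Wt \<delta> :: "real \<Rightarrow> real" and c D :: real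
  assumes "c > 0" and "D > 0"
    and cont_W': "continuous_on {0..1} W'" and cont_Wt: "continuous_on {0..1} Wt"
    and deriv: "\<And>x. x \<in> {0..1} \<Longrightarrow> (W has_real_derivative W' x) (at x within {0..1})"
    and transport: "\<And>x. x \<in> {0..1} \<Longrightarrow> Wt x = W' x + \<delta> x * W 0"
    and \<delta>_bound: "\<And>x. x \<in> {0..1} \<Longrightarrow> \<bar>\<delta> x\<bar> \<le> D"
    and "W 1 = 0"
  shows "integral {0..1} (\<lambda>x. exp (c * x) * (2 * W x * Wt x))
       \<le> - (c - exp c / c * D\<^sup>2) * integral {0..1} (\<lambda>x. exp (c * x) * (W x)\<^sup>2)"
proof -
  define V where "V = integral {0..1} (\<lambda>x. exp (c * x) * (W x)\<^sup>2)"
  define g where "g x = Wt x - W' x" for x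
  \<comment> \<open>The Young weight is chosen so that the cross term costs at most the boundary term \<open>(W 0)\<^sup>2\<close>.\<close>
  define l where "l = c / (D\<^sup>2 * exp c)"
  have cont_W: "continuous_on {0..1} W"
    using deriv DERIV_continuous continuous_on_eq_continuous_within by blast
  have cont_g: "continuous_on {0..1} g"
    unfolding g_def using cont_W' cont_Wt by (intro continuous_intros)
  have g_bound: "\<bar>g x\<bar> \<le> D * \<bar>W 0\<bar>" if "x \<in> {0..1}" for x
    using transport[OF that] \<delta>_bound[OF that]
    by (simp add: g_def abs_mult mult_right_mono)
  have "integral {0..1} (\<lambda>x. exp (c * x) * (2 * W x * Wt x))
      = integral {0..1} (\<lambda>x. exp (c * x) * (2 * W x * W' x))
        + integral {0..1} (\<lambda>x. exp (c * x) * (2 * W x * g x))"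
    using cont_W cont_W' cont_Wt
    by (subst integral_add[symmetric])
      (auto intro!: integrable_continuous_interval continuous_intros simp: g_def algebra_simps)
  also have "integral {0..1} (\<lambda>x. exp (c * x) * (2 * W x * W' x)) = - (W 0)\<^sup>2 - c * V"
    using weighted_energy_identity[OF cont_W' deriv] \<open>W 1 = 0\<close> by (simp add: V_def)
  also have "integral {0..1} (\<lambda>x. exp (c * x) * (2 * W x * g x))
      \<le> l * (D * \<bar>W 0\<bar>)\<^sup>2 * ((exp c - 1) / c) + V / l"
    unfolding V_def
    using \<open>c > 0\<close> \<open>D > 0\<close> cont_W cont_g g_bound
    by (intro weighted_cross_term_bound) (auto simp: l_def)
  also have "l * (D * \<bar>W 0\<bar>)\<^sup>2 * ((exp c - 1) / c) = (W 0)\<^sup>2 * (1 - exp (- c))"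
    using \<open>c > 0\<close> \<open>D > 0\<close> by (simp add: l_def exp_minus field_simps power_mult_distrib)
  also have "\<dots> \<le> (W 0)\<^sup>2"
    by (simp add: mult_left_le)
  also have "V / l = exp c / c * D\<^sup>2 * V"
    by (simp add: l_def)
  finally show ?thesis
    by (simp add: V_def algebra_simps)
qed

lemma has_real_derivative_weighted_energy:
  fixes w wt :: "real \<Rightarrow> real \<Rightarrow> real" and \<rho> :: "real \<Rightarrow> real" and s :: real
  assumes "continuous_on {0..1} \<rho>"
    and cont_w: "continuous_on ({0..1} \<times> {0..}) (\<lambda>(x, t). w x t)"
    and cont_wt: "continuous_on ({0..1} \<times> {0..}) (\<lambda>(x, t). wt x t)"
    and deriv: "\<And>x t. x \<in> {0..1} \<Longrightarrow> t \<ge> 0 \<Longrightarrow>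
                  ((\<lambda>t. w x t) has_real_derivative wt x t) (at t within {0..})"
    and "s \<ge> 0"
  shows "((\<lambda>t. integral {0..1} (\<lambda>x. \<rho> x * (w x t)\<^sup>2)) has_real_derivative
           integral {0..1} (\<lambda>x. \<rho> x * (2 * w x s * wt x s))) (at s within {0..})"
proof -
  have "continuous_on ({0..1} \<times> {0..}) (\<lambda>(x, t). \<rho> x * (2 * w x t * wt x t))"
  proof -
    have "continuous_on ({0..1} \<times> {0..}) (\<lambda>p. \<rho> (fst p) * (2 * w (fst p) (snd p) * wt (fst p) (snd p)))"
      using assms(1) cont_w cont_wt
      by (intro continuous_intros continuous_on_compose2[OF assms(1)]) (auto simp: case_prod_beta)
    then show ?thesis
      by (simp add: case_prod_beta)
  qed
  then have "continuous_on ({0..} \<times> cbox 0 1) (\<lambda>(t, x). \<rho> x * (2 * w x t * wt x t))"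
    using continuous_on_swap_args by fastforce
  moreover have "(\<lambda>x. \<rho> x * (w x t)\<^sup>2) integrable_on cbox 0 1" if "t \<in> {0..}" for t
    using assms(1) continuous_on_slice[OF cont_w that]
    by (auto intro!: integrable_continuous_interval continuous_intros)
  ultimately have "((\<lambda>t. integral (cbox 0 1) (\<lambda>x. \<rho> x * (w x t)\<^sup>2)) has_field_derivative
      integral (cbox 0 1) (\<lambda>x. \<rho> x * (2 * w x s * wt x s))) (at s within {0..})"
    using \<open>s \<ge> 0\<close> deriv
    by (intro leibniz_rule_field_derivative[where f = "\<lambda>t x. \<rho> x * (w x t)\<^sup>2"
          and fx = "\<lambda>t x. \<rho> x * (2 * w x t * wt x t)"])
      (auto intro!: derivative_eq_intros)
  then show ?thesis
    by simp
qed

lemma exponential_decay_of_differential_inequality: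
  fixes f f' :: "real \<Rightarrow> real" and a t :: real
  assumes deriv: "\<And>s. s \<ge> 0 \<Longrightarrow> (f has_real_derivative f' s) (at s within {0..})"
    and ineq: "\<And>s. s \<ge> 0 \<Longrightarrow> f' s \<le> - a * f s"
    and "t \<ge> 0"
  shows "f t \<le> f 0 * exp (- a * t)"
proof -
  define h where "h s = f s * exp (a * s)" for s
  have deriv_h: "(h has_real_derivative exp (a * s) * (f' s + a * f s)) (at s within {0..})"
    if "s \<ge> 0" for s
    unfolding h_def using deriv[OF that]
    by (auto intro!: derivative_eq_intros simp: algebra_simps)
  have "h t \<le> h 0"
  proof (rule DERIV_nonpos_imp_decreasing_open[OF \<open>t \<ge> 0\<close>])
    fix s :: real
    assume "0 < s" "s < t"
    then have "at s within {0..} = at s"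
      by (intro at_within_open_subset[of _ "{0<..}"]) auto
    then show "\<exists>y. DERIV h s :> y \<and> y \<le> 0"
      using deriv_h[of s] ineq[of s] \<open>0 < s\<close>
      by (auto intro!: mult_nonneg_nonpos)
  next
    show "continuous_on {0..t} h"
      using deriv_h DERIV_continuous
      by (force simp: continuous_on_eq_continuous_within intro: continuous_within_subset)
  qed
  then have "f t * exp (a * t) * exp (- a * t) \<le> f 0 * exp (- a * t)"
    by (simp add: h_def)
  then show ?thesis
    by (simp add: mult.assoc flip: exp_add)
qed

lemma abs_integral_convolution_le:
  fixes \<beta> f :: "real \<Rightarrow> real" and B \<epsilon> x :: real
  assumes \<beta>_bound: "\<forall>y\<in>{0..1}. \<bar>\<beta> y\<bar> \<le> B" and f_bound: "\<forall>y\<in>{0..1}. \<bar>f y\<bar> \<le> \<epsilon>"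
    and "x \<in> {0..1}"
  shows "\<bar>integral {0..x} (\<lambda>y. \<beta> (x - y) * f y)\<bar> \<le> B * \<epsilon> * x"
proof -
  have "0 \<le> B" "0 \<le> \<epsilon>"
    using \<beta>_bound f_bound by (auto dest!: bspec[of _ _ 0])
  have pointwise: "norm (\<beta> (x - y) * f y) \<le> B * \<epsilon>" if "y \<in> {0..x} - {}" for y
  proof -
    have "x - y \<in> {0..1}" "y \<in> {0..1}"
      using \<open>x \<in> {0..1}\<close> that by auto
    then show ?thesis
      using \<beta>_bound f_bound by (auto simp: abs_mult intro!: mult_mono)
  qed
  show ?thesis
  proof (cases "(\<lambda>y. \<beta> (x - y) * f y) integrable_on {0..x}")
    case True
    then show ?thesis
      using has_integral_bound_real[OF _ finite.emptyI integrable_integral[OF True] pointwise]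
        \<open>0 \<le> B\<close> \<open>0 \<le> \<epsilon>\<close> \<open>x \<in> {0..1}\<close> by simp
  next
    case False
    then show ?thesis
      using \<open>0 \<le> B\<close> \<open>0 \<le> \<epsilon>\<close> \<open>x \<in> {0..1}\<close> by (simp add: not_integrable_integral)
  qed
qed

lemma eps_star_le_eps_star_2:
  fixes B c :: real
  assumes "B > -1"
  shows "eps_star c B \<le> eps_star 2 B"
proof -
  have "c * exp (- c / 2) \<le> 2 * exp (c / 2 - 1) * exp (- c / 2)"
    using exp_ge_add_one_self[of "c / 2 - 1"] by simp
  also have "\<dots> = 2 * exp (- 2 / 2)"
    by (simp flip: exp_add)
  finally show ?thesis
    unfolding eps_star_def using assms by (intro divide_right_mono) auto
qed

lemma eps_star_2: "eps_star 2 B = 2 / (exp 1 * (1 + B))"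
  by (simp add: eps_star_def exp_minus field_simps)

lemma decay_rate_pos:
  fixes B c \<epsilon> :: real
  assumes "B > -1" and "c > 0" and "0 < \<epsilon>" and "\<epsilon> < eps_star c B"
  shows "c - exp c / c * \<epsilon>\<^sup>2 * (1 + B)\<^sup>2 > 0"
proof -
  have "\<epsilon> * (1 + B) < c * exp (- c / 2)"
    using assms unfolding eps_star_def by (simp add: field_simps)
  then have "(\<epsilon> * (1 + B))\<^sup>2 < (c * exp (- c / 2))\<^sup>2"
    using assms by (intro power_strict_mono) auto
  also have "\<dots> = c\<^sup>2 * exp (- c)"
    by (simp add: power2_eq_square flip: exp_add)
  finally show ?thesis
    using \<open>c > 0\<close> by (simp add: exp_minus power_mult_distrib field_simps power2_eq_square)
qed

lemma classical_solution_weighted_energy_decay: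
  fixes \<delta> :: "real \<Rightarrow> real" and w :: "real \<Rightarrow> real \<Rightarrow> real" and c D t :: real
  assumes "c > 0" and "D > 0" and \<delta>_bound: "\<And>x. x \<in> {0..1} \<Longrightarrow> \<bar>\<delta> x\<bar> \<le> D"
    and "classical_solution \<delta> w" and "t \<ge> 0"
  shows "integral {0..1} (\<lambda>x. exp (c * x) * (w x t)\<^sup>2)
       \<le> integral {0..1} (\<lambda>x. exp (c * x) * (w x 0)\<^sup>2) * exp (- (c - exp c / c * D\<^sup>2) * t)"
proof -
  obtain wx wt where
      cont_w: "continuous_on ({0..1} \<times> {0..}) (\<lambda>(x, t). w x t)"
    and cont_wx: "continuous_on ({0..1} \<times> {0..}) (\<lambda>(x, t). wx x t)"
    and cont_wt: "continuous_on ({0..1} \<times> {0..}) (\<lambda>(x, t). wt x t)"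
    and pde: "\<forall>x\<in>{0..1}. \<forall>t\<in>{0..}.
                ((\<lambda>y. w y t) has_real_derivative wx x t) (at x within {0..1}) \<and>
                ((\<lambda>s. w x s) has_real_derivative wt x t) (at t within {0..}) \<and>
                wt x t = wx x t + \<delta> x * w 0 t"
    and bc: "\<forall>t\<in>{0..}. w 1 t = 0"
    using \<open>classical_solution \<delta> w\<close> unfolding classical_solution_def by blast
  define V where "V s = integral {0..1} (\<lambda>x. exp (c * x) * (w x s)\<^sup>2)" for s
  define V' where "V' s = integral {0..1} (\<lambda>x. exp (c * x) * (2 * w x s * wt x s))" for s
  have deriv_V: "(V has_real_derivative V' s) (at s within {0..})" if "s \<ge> 0" for s
    unfolding V_def V'_def using that
    by (intro has_real_derivative_weighted_energy cont_w cont_wt continuous_intros)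
      (meson atLeast_iff pde)+
  have dissipation: "V' s \<le> - (c - exp c / c * D\<^sup>2) * V s" if "s \<ge> 0" for s
    unfolding V_def V'_def
  proof (rule weighted_energy_dissipation[where \<delta> = \<delta> and W' = "\<lambda>x. wx x s"])
    show "continuous_on {0..1} (\<lambda>x. wx x s)" "continuous_on {0..1} (\<lambda>x. wt x s)"
      using that by (auto intro: continuous_on_slice[OF cont_wx] continuous_on_slice[OF cont_wt])
  qed (use \<open>c > 0\<close> \<open>D > 0\<close> \<delta>_bound pde bc that in auto)
  show ?thesis
    using exponential_decay_of_differential_inequality[OF deriv_V dissipation \<open>t \<ge> 0\<close>]
    by (simp add: V_def)
qed

theorem lemma2:
  fixes B c \<epsilon> :: real and \<beta> k k_hat :: "real \<Rightarrow> real" and w :: "real \<Rightarrow> real \<Rightarrow> real"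
  assumes "B > 0" and "c > 0"
    and "\<exists>L. L-lipschitz_on {0..1} \<beta>"
    and "\<forall>x\<in>{0..1}. \<bar>\<beta> x\<bar> \<le> B"
    and "backstepping_kernel \<beta> k"
    and "continuous_on {0..1} k_hat"
    and "\<forall>x\<in>{0..1}. \<bar>k x - k_hat x\<bar> < \<epsilon>"
    and "0 < \<epsilon>" and "\<epsilon> < eps_star c B"
    and "classical_solution
           (\<lambda>x. - (k x - k_hat x) + integral {0..x} (\<lambda>y. \<beta> (x - y) * (k y - k_hat y))) w"
  shows "c - exp c / c * \<epsilon>\<^sup>2 * (1 + B)\<^sup>2 > 0
       \<and> (\<forall>t\<ge>0. integral {0..1} (\<lambda>x. exp (c * x) * (w x t)\<^sup>2)
                 \<le> integral {0..1} (\<lambda>x. exp (c * x) * (w x 0)\<^sup>2)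
                   * exp (- (c - exp c / c * \<epsilon>\<^sup>2 * (1 + B)\<^sup>2) * t))
       \<and> (\<forall>c'>0. eps_star c' B \<le> eps_star 2 B)
       \<and> eps_star 2 B = 2 / (exp 1 * (1 + B))"
proof -
  have error_bound: "\<forall>x\<in>{0..1}. \<bar>k x - k_hat x\<bar> \<le> \<epsilon>"
    using assms(7) by (simp add: less_imp_le)
  have \<delta>_bound: "\<bar>- (k x - k_hat x) + integral {0..x} (\<lambda>y. \<beta> (x - y) * (k y - k_hat y))\<bar>
      \<le> \<epsilon> * (1 + B)" if "x \<in> {0..1}" for x
  proof -
    have "\<bar>integral {0..x} (\<lambda>y. \<beta> (x - y) * (k y - k_hat y))\<bar> \<le> B * \<epsilon> * x"
      using abs_integral_convolution_le[OF assms(4) error_bound that] .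
    also have "\<dots> \<le> B * \<epsilon>"
      using that \<open>B > 0\<close> \<open>0 < \<epsilon>\<close> by (simp add: mult_left_le)
    moreover have "\<bar>k x - k_hat x\<bar> \<le> \<epsilon>"
      using error_bound that by blast
    ultimately show ?thesis
      using abs_triangle_ineq[of "- (k x - k_hat x)"] by (simp add: algebra_simps)
  qed
  have "\<forall>t\<ge>0. integral {0..1} (\<lambda>x. exp (c * x) * (w x t)\<^sup>2)
      \<le> integral {0..1} (\<lambda>x. exp (c * x) * (w x 0)\<^sup>2) * exp (- (c - exp c / c * (\<epsilon> * (1 + B))\<^sup>2) * t)"
    using classical_solution_weighted_energy_decay[OF \<open>c > 0\<close> _ \<delta>_bound assms(10)]
      \<open>B > 0\<close> \<open>0 < \<epsilon>\<close> by simp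
  then show ?thesis
    using decay_rate_pos[OF _ \<open>c > 0\<close> \<open>0 < \<epsilon>\<close> \<open>\<epsilon> < eps_star c B\<close>]
      eps_star_le_eps_star_2 eps_star_2 \<open>B > 0\<close>
    by (simp add: power_mult_distrib mult.assoc)
qed

end
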